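(* For every real number $x$, \[ \arctan(x)=-2\sum_{m=1}^{\infty}\sum_{n=1}^{2m-1}\frac{(-1)^{n}}{(2m-1)\left(1+x^{2}/4\right)^{2m-1}}\left(\frac{x}{2}\right)^{2(2m-n)-1}\binom{2m-1}{2n-1}. \] *)

theory Defs
  imports "HOL-Analysis.Analysis"
begin

end

theory Submission
  imports Defs
begin

text \<open>
  Put \<open>y = x/2\<close> and \<open>z = y (y + i) / (1 + y\<^sup>2)\<close>. Then \<open>|z| < 1\<close> and
  \<open>(1 + z) / (1 - z) = 1 + i x\<close>, so taking imaginary parts in
  \<open>Ln ((1 + z) / (1 - z)) = 2 \<Sum>\<^sub>m z\<^bsup>2m+1\<^esup> / (2m+1)\<close> gives
  \<open>arctan x = Arg (1 + i x) = 2 \<Sum>\<^sub>m Im (z\<^bsup>2m+1\<^esup>) / (2m+1)\<close>.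
  Expanding \<open>(y + i)\<^sup>k\<close> binomially shows that \<open>- Im (z\<^sup>k) / k\<close> is the inner sum
  of the theorem for \<open>k = 2m - 1\<close>.
\<close>

lemma Ln_series_quadratic_complex:
  fixes z :: complex
  assumes "norm z < 1"
  shows "(\<lambda>n. 2 * z^(2*n+1) / of_nat (2*n+1)) sums Ln ((1 + z) / (1 - z))"
proof -
  have "norm (\<i>*z) < 1" using assms by (simp add: norm_mult)
  then have series:
    "(\<lambda>n. -2*\<i> * ((-1)^n / of_nat (2*n+1) * (\<i>*z)^(2*n+1))) sums (-2*\<i> * Arctan (\<i>*z))"
    by (intro sums_mult Arctan_series(2))
  have summand: "-2*\<i> * ((-1)^n / of_nat (2*n+1) * (\<i>*z)^(2*n+1)) = 2 * z^(2*n+1) / of_nat (2*n+1)"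
    for n
  proof -
    have "\<i>^(2*n+1) = \<i> * (-1)^n"
      by (simp add: power_mult)
    then have "(\<i>*z)^(2*n+1) = \<i> * (-1)^n * z^(2*n+1)"
      by (simp only: power_mult_distrib)
    moreover have "(-1::complex)^n * (-1)^n = 1"
      by (simp flip: power_add)
    ultimately show ?thesis by (simp add: field_simps)
  qed
  have limit: "-2*\<i> * Arctan (\<i>*z) = Ln ((1 + z) / (1 - z))"
    by (simp add: Arctan_def)
  show ?thesis using series unfolding summand limit .
qed

lemma arctan_eq_Im_Ln: "arctan x = Im (Ln (Complex 1 x))"
  by (subst Im_Ln_eq) (auto simp: complex_eq_iff)

lemma Im_of_real_add_imaginary_unit_power:
  fixes y :: real
  shows "Im ((of_real y + \<i>)^k) = (\<Sum>p<k. real (k choose (2*p+1)) * y^(k-2*p-1) * (-1)^p)"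
proof -
  define g where "g j = real (k choose j) * y^(k-j) * Im (\<i>^j)" for j
  have "Im ((of_real y + \<i>)^k) = (\<Sum>j\<le>k. g j)"
    by (simp add: binomial_ring[of "\<i>" "of_real y" k] add.commute Im_sum g_def mult_ac
        flip: of_real_power)
  also have "\<dots> = (\<Sum>j<2*(k+1). g j)"
    by (rule sum.mono_neutral_left) (auto simp: g_def)
  also have "\<dots> = (\<Sum>p<k+1. g (2*p)) + (\<Sum>p<k+1. g (2*p+1))"
    using sum_split_even_odd[of g g "k+1"] by simp
  also have "(\<Sum>p<k+1. g (2*p)) = 0"
    by (simp add: g_def power_mult)
  also have "(\<Sum>p<k+1. g (2*p+1)) = (\<Sum>p<k. real (k choose (2*p+1)) * y^(k-2*p-1) * (-1)^p)"
    by (simp add: g_def power_mult)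
  finally show ?thesis by simp
qed

text \<open>\<open>cayley_point y = i y / (1 + i y)\<close>, the preimage of \<open>1 + 2 i y\<close> under \<open>w \<mapsto> (1 + w) / (1 - w)\<close>.\<close>

definition cayley_point :: "real \<Rightarrow> complex" where
  "cayley_point y = of_real (y / (1 + y^2)) * (of_real y + \<i>)"

lemma norm_cayley_point_less_1: "norm (cayley_point y) < 1"
proof -
  have pos: "1 + y^2 > 0" by (simp add: add_pos_nonneg)
  have "norm (of_real y + \<i>) ^ 2 = 1 + y^2"
    by (simp add: cmod_power2)
  then have "norm (cayley_point y) ^ 2 = y^2 / (1 + y^2)"
    using pos unfolding cayley_point_def
    by (simp only: norm_mult power_mult_distrib norm_of_real power2_abs)
      (simp add: power_divide power2_eq_square)
  also have "\<dots> < 1" using pos by simp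
  finally show ?thesis by (simp add: power_less_one_iff abs_square_less_1)
qed

lemma cayley_point_quotient: "(1 + cayley_point y) / (1 - cayley_point y) = Complex 1 (2*y)"
proof -
  have pos: "1 + y^2 > 0" by (simp add: add_pos_nonneg)
  have "Re (1 - cayley_point y) > 0"
    using pos by (simp add: cayley_point_def field_simps) (simp add: power2_eq_square)
  then have "1 - cayley_point y \<noteq> 0" by auto
  moreover have "1 + cayley_point y = Complex 1 (2*y) * (1 - cayley_point y)"
    using pos by (simp add: complex_eq_iff cayley_point_def field_simps power2_eq_square)
  ultimately show ?thesis by simp
qed

lemma binomial_sum_eq_Im_cayley_point_power:
  fixes y :: real
  shows "(\<Sum>n=1..k. (-1)^n / (real k * (1+y^2)^k) * y^(2*(k+1-n)-1) * real (k choose (2*n-1)))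
     = - Im (cayley_point y ^ k) / real k"
proof -
  have summand: "(-1)^Suc p / (real k * (1+y^2)^k) * y^(2*(k+1-Suc p)-1) * real (k choose (2*Suc p-1))
      = - (y^k / (1+y^2)^k) * (real (k choose (2*p+1)) * y^(k-2*p-1) * (-1)^p) / real k" for p
  proof (cases "2*p+1 \<le> k")
    case True
    then have "y^(2*(k+1-Suc p)-1) = y^k * y^(k-2*p-1)"
      by (simp flip: power_add) (rule arg_cong[where f="\<lambda>e. y^e"], linarith)
    then show ?thesis by (simp add: field_simps)
  next
    case False
    then show ?thesis by (simp add: binomial_eq_0)
  qed
  have "(\<Sum>n=1..k. (-1)^n / (real k * (1+y^2)^k) * y^(2*(k+1-n)-1) * real (k choose (2*n-1)))
      = (\<Sum>p<k. (-1)^Suc p / (real k * (1+y^2)^k) * y^(2*(k+1-Suc p)-1)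
                 * real (k choose (2*Suc p-1)))"
    by (simp only: One_nat_def sum.atLeast1_atMost_eq)
  also have "\<dots> = - (y^k / (1+y^2)^k) * Im ((of_real y + \<i>)^k) / real k"
    by (simp only: summand Im_of_real_add_imaginary_unit_power sum_distrib_left sum_divide_distrib)
  also have "\<dots> = - Im (cayley_point y ^ k) / real k"
    by (simp add: cayley_point_def power_mult_distrib power_divide flip: of_real_power)
  finally show ?thesis .
qed

theorem mainTheorem2:
  fixes x :: real
  shows "arctan x = -2 * (\<Sum>m. (\<Sum>n=1..2*(m+1)-1.
            (-1) ^ n / (real (2*(m+1)-1) * (1 + x^2/4) ^ (2*(m+1)-1))
            * (x/2) ^ (2*(2*(m+1)-n)-1) * real ((2*(m+1)-1) choose (2*n-1))))"
    (is "_ = -2 * (\<Sum>m. ?inner m)")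
proof -
  define z where "z = cayley_point (x/2)"
  have "(\<lambda>m. 2 * z^(2*m+1) / of_nat (2*m+1)) sums Ln (Complex 1 x)"
    using Ln_series_quadratic_complex[OF norm_cayley_point_less_1[of "x/2"]]
    unfolding z_def cayley_point_quotient by simp
  then have series: "(\<lambda>m. 2 * Im (z^(2*m+1)) / real (2*m+1)) sums arctan x"
    by (simp add: sums_complex_iff arctan_eq_Im_Ln)
  have inner: "?inner m = - Im (z^(2*m+1)) / real (2*m+1)" for m
  proof -
    have "2*(m+1) - 1 = 2*m+1" "2*m+1+1 = 2*(m+1)" "(x/2)^2 = x^2/4"
      by (simp_all add: power_divide)
    then show ?thesis
      using binomial_sum_eq_Im_cayley_point_power[where y="x/2" and k="2*m+1", folded z_def]
      by (simp only:)
  qed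
  have "-2 * ?inner m = 2 * Im (z^(2*m+1)) / real (2*m+1)" for m
    unfolding inner by simp
  then have "(\<lambda>m. -2 * ?inner m) sums arctan x"
    using series by (simp only:)
  then have "?inner sums (arctan x / -2)" by (rule sums_mult_D) simp
  then show ?thesis by (simp add: sums_iff)
qed

end
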